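(* For every state $\rho\in\mathsf{St}(S)$, $$\mathsf{Erg}(\rho)\le \mathsf A_w(\rho)\,\max_{\sigma\in\mathsf{St}(S):\ \mathrm{Supp}(\sigma)\subseteq\mathrm{Supp}(\rho)}\mathsf{Erg}(\sigma)$$ and $$\mathsf{Erg}(\rho)\le\min\{\mathsf A_r(\rho),1\}\,(E_{i_{\max}}-E_1),$$ where $i_{\max}=\max\{i:\langle i|\rho|i\rangle\neq0\}$.
   Context: $S$ is a $d$-dimensional quantum system with non-degenerate Hamiltonian $H=\sum_i E_i|i\rangle\langle i|$, $E_1<\dots<E_d$. $\mathsf{St}(S)$ is the set of density matrices; $\mathrm{Supp}$ denotes the support (range). Ergotropy: $\mathsf{Erg}(\rho)=\mathrm{Tr}[H\rho]-\min_U\mathrm{Tr}[HU\rho U^\dagger]$ over unitaries $U$. $\mathsf P(S)$ is the set of passive states, i.e. states $\sum_i p_i|i\rangle\langle i|$ with $p_1\ge\dots\ge p_d$. Activity weight: $\mathsf A_w(\rho)=\min\{t\ge0:\ \rho=t\sigma+(1-t)\tau,\ \sigma\in\mathsf{St}(S),\ \tau\in\mathsf P(S)\}$. Robustness of activity: $\mathsf A_r(\rho)=\min\{t\ge0:\ \exists\sigma\in\mathsf{St}(S),\ (\rho+t\sigma)/(1+t)\in\mathsf P(S)\}$. *)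

theory Defs
  imports Complex_Main "Jordan_Normal_Form.Schur_Decomposition"
begin

text \<open>Quantum system of dimension d; matrices are d x d complex matrices, basis
  vectors are indexed 0..d-1 (paper's index i corresponds to i-1 here).\<close>

definition mtrace :: "complex mat \<Rightarrow> complex" where
  "mtrace A = (\<Sum>i<dim_row A. A $$ (i, i))"

definition hamiltonian :: "nat \<Rightarrow> (nat \<Rightarrow> real) \<Rightarrow> complex mat" where
  "hamiltonian d E = mat_diag d (\<lambda>i. complex_of_real (E i))"

definition psd_mat :: "nat \<Rightarrow> complex mat \<Rightarrow> bool" where
  "psd_mat d A \<longleftrightarrow> A \<in> carrier_mat d d \<and> mat_adjoint A = A \<and>
     (\<forall>v \<in> carrier_vec d. 0 \<le> Re ((A *\<^sub>v v) \<bullet>c v))"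

definition density :: "nat \<Rightarrow> complex mat \<Rightarrow> bool" where
  "density d \<rho> \<longleftrightarrow> psd_mat d \<rho> \<and> mtrace \<rho> = 1"

definition unitary_mat :: "nat \<Rightarrow> complex mat \<Rightarrow> bool" where
  "unitary_mat d U \<longleftrightarrow> U \<in> carrier_mat d d \<and> mat_adjoint U * U = 1\<^sub>m d"

definition energy :: "nat \<Rightarrow> (nat \<Rightarrow> real) \<Rightarrow> complex mat \<Rightarrow> real" where
  "energy d E \<rho> = Re (mtrace (hamiltonian d E * \<rho>))"

text \<open>Ergotropy; the minimum over unitaries is written as an infimum (it is attained).\<close>
definition ergotropy :: "nat \<Rightarrow> (nat \<Rightarrow> real) \<Rightarrow> complex mat \<Rightarrow> real" where
  "ergotropy d E \<rho> = energy d E \<rho> -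
     (INF U \<in> {U. unitary_mat d U}. energy d E (U * \<rho> * mat_adjoint U))"

definition passive_state :: "nat \<Rightarrow> complex mat \<Rightarrow> bool" where
  "passive_state d \<tau> \<longleftrightarrow> density d \<tau> \<and>
     (\<exists>p :: nat \<Rightarrow> real. \<tau> = mat_diag d (\<lambda>i. complex_of_real (p i)) \<and>
        (\<forall>i j. i \<le> j \<longrightarrow> j < d \<longrightarrow> p j \<le> p i))"

definition activity_weight :: "nat \<Rightarrow> complex mat \<Rightarrow> real" where
  "activity_weight d \<rho> = Inf {t. t \<ge> 0 \<and> (\<exists>\<sigma> \<tau>. density d \<sigma> \<and> passive_state d \<tau> \<and>
      \<rho> = complex_of_real t \<cdot>\<^sub>m \<sigma> + complex_of_real (1 - t) \<cdot>\<^sub>m \<tau>)}"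

definition activity_robustness :: "nat \<Rightarrow> complex mat \<Rightarrow> real" where
  "activity_robustness d \<rho> = Inf {t. t \<ge> 0 \<and> (\<exists>\<sigma>. density d \<sigma> \<and>
      passive_state d (complex_of_real (1 / (1 + t)) \<cdot>\<^sub>m (\<rho> + complex_of_real t \<cdot>\<^sub>m \<sigma>)))}"

definition supp :: "nat \<Rightarrow> complex mat \<Rightarrow> complex vec set" where
  "supp d A = {A *\<^sub>v v | v. v \<in> carrier_vec d}"

end

theory Submission
  imports Defs
begin

text \<open>After a unitary \<open>U\<close> the level populations of \<open>\<rho>\<close> become the diagonal \<open>q\<close> of
  \<open>U \<rho> U\<^sup>\<dagger>\<close>, and the extracted work is \<open>\<Sum>i. E i * (p i - q i)\<close> with \<open>p\<close> the diagonal of \<open>\<rho>\<close>.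
  By Abel summation this is \<open>\<Sum>j. (E (j+1) - E j) * (Q j - P j)\<close> for the partial sums \<open>P\<close>, \<open>Q\<close>
  of \<open>p\<close>, \<open>q\<close>. Ky Fan's principle gives \<open>Q j \<le> P j\<close> for passive states, so they yield no work,
  and a decomposition \<open>\<rho> = t \<sigma> + (1 - t) \<tau>\<close> with \<open>\<tau>\<close> passive gives \<open>Erg \<rho> \<le> t Erg \<sigma>\<close>;
  moreover \<open>Supp \<sigma> \<subseteq> Supp \<rho>\<close>, because the kernel of \<open>\<rho>\<close> lies in that of \<open>\<sigma>\<close> and the range of
  a positive semidefinite matrix is the orthogonal complement of its kernel. If instead
  \<open>\<rho> = (1 + t) \<tau> - t \<sigma>\<close> with \<open>\<tau>\<close> passive, then \<open>Q j - P j \<le> t\<close> for all \<open>j\<close>, and \<open>Q j - P j \<le> 0\<close>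
  from \<open>i\<^sub>m\<^sub>a\<^sub>x\<close> on, as \<open>\<rho>\<close> has no population above \<open>i\<^sub>m\<^sub>a\<^sub>x\<close>; hence \<open>Erg \<rho> \<le> t (E i\<^sub>m\<^sub>a\<^sub>x - E 0)\<close>.
  Both bounds pass to the infimum over admissible \<open>t\<close>.\<close>

text \<open>Matrices are first handled as index functions of explicit size \<open>n\<close>, which keeps the
  inductive argument on the range free of carrier bookkeeping.\<close>

definition mulv :: "nat \<Rightarrow> (nat \<Rightarrow> nat \<Rightarrow> complex) \<Rightarrow> (nat \<Rightarrow> complex) \<Rightarrow> nat \<Rightarrow> complex" where
  "mulv n A x i = (\<Sum>j<n. A i j * x j)"

definition quad_form :: "nat \<Rightarrow> (nat \<Rightarrow> nat \<Rightarrow> complex) \<Rightarrow> (nat \<Rightarrow> complex) \<Rightarrow> complex" where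
  "quad_form n A v = (\<Sum>i<n. \<Sum>j<n. cnj (v i) * A i j * v j)"

definition hermitian_fun :: "nat \<Rightarrow> (nat \<Rightarrow> nat \<Rightarrow> complex) \<Rightarrow> bool" where
  "hermitian_fun n A \<longleftrightarrow> (\<forall>i<n. \<forall>j<n. A j i = cnj (A i j))"

definition psd_fun :: "nat \<Rightarrow> (nat \<Rightarrow> nat \<Rightarrow> complex) \<Rightarrow> bool" where
  "psd_fun n A \<longleftrightarrow> (\<forall>v. 0 \<le> Re (quad_form n A v))"

definition in_kernel :: "nat \<Rightarrow> (nat \<Rightarrow> nat \<Rightarrow> complex) \<Rightarrow> (nat \<Rightarrow> complex) \<Rightarrow> bool" where
  "in_kernel n A x \<longleftrightarrow> (\<forall>i<n. mulv n A x i = 0)"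

definition orthogonal_fun :: "nat \<Rightarrow> (nat \<Rightarrow> complex) \<Rightarrow> (nat \<Rightarrow> complex) \<Rightarrow> bool" where
  "orthogonal_fun n y x \<longleftrightarrow> (\<Sum>i<n. y i * cnj (x i)) = 0"

lemma hermitian_funD: "hermitian_fun n A \<Longrightarrow> i < n \<Longrightarrow> j < n \<Longrightarrow> A j i = cnj (A i j)"
  unfolding hermitian_fun_def by blast

lemma psd_funD: "psd_fun n A \<Longrightarrow> 0 \<le> Re (quad_form n A v)"
  unfolding psd_fun_def by blast

lemma quad_form_eq_sum_mulv: "quad_form n A v = (\<Sum>i<n. cnj (v i) * mulv n A v i)"
  unfolding quad_form_def mulv_def by (simp add: sum_distrib_left mult.assoc)

lemma in_kernel_imp_quad_form_0: "in_kernel n A x \<Longrightarrow> quad_form n A x = 0"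
  unfolding in_kernel_def quad_form_eq_sum_mulv by simp

lemma inner_mulv_hermitian:
  assumes "hermitian_fun n A"
  shows "(\<Sum>i<n. mulv n A v i * cnj (x i)) = (\<Sum>j<n. v j * cnj (mulv n A x j))"
proof -
  have "(\<Sum>i<n. mulv n A v i * cnj (x i)) = (\<Sum>i<n. \<Sum>j<n. A i j * v j * cnj (x i))"
    unfolding mulv_def by (simp add: sum_distrib_right)
  also have "\<dots> = (\<Sum>j<n. \<Sum>i<n. A i j * v j * cnj (x i))"
    by (rule sum.swap)
  also have "\<dots> = (\<Sum>j<n. \<Sum>i<n. v j * cnj (A j i * x i))"
  proof (intro sum.cong refl)
    fix i j assume "i \<in> {..<n}" "j \<in> {..<n}"
    hence "A i j = cnj (A j i)" by (intro hermitian_funD[OF assms]) auto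
    thus "A i j * v j * cnj (x i) = v j * cnj (A j i * x i)" by (simp add: mult.commute)
  qed
  finally show ?thesis unfolding mulv_def by (simp add: sum_distrib_left)
qed

lemma mulv_unit: "k < n \<Longrightarrow> mulv n A (\<lambda>j. if j = k then 1 else 0) i = A i k"
  unfolding mulv_def by (simp add: if_distrib[of "(*) _"] cong: if_cong)

lemma quad_form_unit: "k < n \<Longrightarrow> quad_form n A (\<lambda>j. if j = k then 1 else 0) = A k k"
proof -
  assume k: "k < n"
  have "quad_form n A (\<lambda>j. if j = k then 1 else 0) = (\<Sum>j<n. if j = k then A j k else 0)"
    unfolding quad_form_eq_sum_mulv mulv_unit[OF k] by (intro sum.cong) auto
  also have "\<dots> = A k k" using k by simp
  finally show ?thesis .
qed

lemma quad_form_lincomb: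
  assumes "\<And>k l. k < n \<Longrightarrow> l < n \<Longrightarrow> A k l = a * B k l + b * C k l"
  shows "quad_form n A w = a * quad_form n B w + b * quad_form n C w"
  unfolding quad_form_def using assms by (simp add: algebra_simps sum.distrib sum_distrib_left)

lemma quad_form_add_scaled:
  "quad_form n A (\<lambda>i. v i + complex_of_real s * w i) =
     quad_form n A v + complex_of_real s * (\<Sum>i<n. cnj (v i) * mulv n A w i)
       + complex_of_real s * (\<Sum>i<n. cnj (w i) * mulv n A v i)
       + complex_of_real (s\<^sup>2) * quad_form n A w"
  unfolding quad_form_def mulv_def
  by (simp add: algebra_simps power2_eq_square sum.distrib sum_distrib_left)

text \<open>If \<open>v\<^sup>* A v = 0\<close>, expanding \<open>(v + s A v)\<^sup>* A (v + s A v) \<ge> 0\<close> gives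
  \<open>2 s |A v|\<^sup>2 + s\<^sup>2 (A v)\<^sup>* A (A v) \<ge> 0\<close> for all real \<open>s\<close>, which forces \<open>A v = 0\<close>.\<close>
lemma psd_quad_form_0_imp_in_kernel:
  assumes h: "hermitian_fun n A" and p: "psd_fun n A" and z: "Re (quad_form n A v) = 0"
  shows "in_kernel n A v"
proof -
  define w where "w = mulv n A v"
  define N where "N = (\<Sum>i<n. (cmod (w i))\<^sup>2)"
  define q where "q = Re (quad_form n A w)"
  have cross1: "(\<Sum>i<n. cnj (w i) * mulv n A v i) = of_real N"
    unfolding N_def w_def of_real_sum
    by (intro sum.cong refl) (metis complex_norm_square mult.commute of_real_power)
  have "(\<Sum>i<n. cnj (v i) * mulv n A w i) = (\<Sum>j<n. w j * cnj (w j))"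
    using inner_mulv_hermitian[OF h, of w v] unfolding w_def by (simp add: mult.commute)
  also have "\<dots> = of_real N"
    unfolding N_def of_real_sum by (intro sum.cong refl) (rule complex_norm_square[symmetric])
  finally have cross2: "(\<Sum>i<n. cnj (v i) * mulv n A w i) = of_real N" .
  have q0: "q \<ge> 0" unfolding q_def by (rule psd_funD[OF p])
  have N0: "N \<ge> 0" unfolding N_def by (simp add: sum_nonneg)
  have key: "0 \<le> 2 * s * N + s\<^sup>2 * q" for s
  proof -
    have "0 \<le> Re (quad_form n A (\<lambda>i. v i + complex_of_real s * w i))" by (rule psd_funD[OF p])
    also have "\<dots> = 2 * s * N + s\<^sup>2 * q"
      unfolding quad_form_add_scaled cross1 cross2 q_def using z by simp
    finally show ?thesis .
  qed
  have "N = 0"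
  proof (rule ccontr)
    assume "N \<noteq> 0"
    hence Np: "N > 0" using N0 by simp
    define s where "s = - N / (q + 1)"
    have "N * q / (q + 1) \<le> N" using Np q0 by (simp add: divide_le_eq)
    hence "2 * N + s * q > 0" unfolding s_def using Np by simp
    moreover have "s < 0" unfolding s_def using Np q0 by simp
    ultimately have "s * (2 * N + s * q) < 0" by (simp add: mult_neg_pos)
    hence "2 * s * N + s\<^sup>2 * q < 0" by (simp add: power2_eq_square algebra_simps)
    thus False using key[of s] by simp
  qed
  hence "\<forall>i<n. w i = 0" unfolding N_def by (subst (asm) sum_nonneg_eq_0_iff) auto
  thus ?thesis unfolding in_kernel_def w_def by blast
qed

definition vcons :: "complex \<Rightarrow> (nat \<Rightarrow> complex) \<Rightarrow> nat \<Rightarrow> complex" where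
  "vcons c v i = (if i = 0 then c else v (i - 1))"

lemma vcons_0 [simp]: "vcons c v 0 = c" and vcons_Suc [simp]: "vcons c v (Suc i) = v i"
  unfolding vcons_def by auto

lemma sum_lessThan_Suc_vcons:
  "(\<Sum>j<Suc n. f j (vcons c v j)) = f 0 c + (\<Sum>j<n. f (Suc j) (v j))"
  by (simp add: sum.lessThan_Suc_shift del: sum.lessThan_Suc)

lemma mulv_vcons: "mulv (Suc n) A (vcons c v) i = A i 0 * c + (\<Sum>j<n. A i (Suc j) * v j)"
  unfolding mulv_def by (rule sum_lessThan_Suc_vcons)

lemma psd_diag_0_imp_col_0:
  assumes h: "hermitian_fun n A" and p: "psd_fun n A" and k: "k < n" and "A k k = 0"
    and i: "i < n"
  shows "A i k = 0" "A k i = 0"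
proof -
  define e where "e = (\<lambda>j. if j = k then 1 else 0 :: complex)"
  have "in_kernel n A e"
    using psd_quad_form_0_imp_in_kernel[OF h p] quad_form_unit[OF k] \<open>A k k = 0\<close> unfolding e_def by simp
  hence "mulv n A e i = 0" using i unfolding in_kernel_def by simp
  thus "A i k = 0" unfolding e_def mulv_unit[OF k] .
  thus "A k i = 0" using hermitian_funD[OF h k i] by simp
qed

text \<open>Gaussian elimination of the first variable. When the pivot \<open>A 0 0\<close> vanishes, so does its
  row (\<open>psd_diag_0_imp_col_0\<close>), and division by zero yields \<open>0\<close>, so no case distinction is needed.\<close>
definition schur_complement :: "(nat \<Rightarrow> nat \<Rightarrow> complex) \<Rightarrow> nat \<Rightarrow> nat \<Rightarrow> complex" where
  "schur_complement A i j = A (Suc i) (Suc j) - A (Suc i) 0 * A 0 (Suc j) / A 0 0"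

definition schur_lift :: "nat \<Rightarrow> (nat \<Rightarrow> nat \<Rightarrow> complex) \<Rightarrow> (nat \<Rightarrow> complex) \<Rightarrow> nat \<Rightarrow> complex" where
  "schur_lift n A x = vcons (- (\<Sum>j<n. A 0 (Suc j) * x j) / A 0 0) x"

lemma mulv_schur_lift_Suc:
  "mulv (Suc n) A (schur_lift n A x) (Suc i) = mulv n (schur_complement A) x i"
  unfolding schur_lift_def mulv_vcons unfolding mulv_def schur_complement_def
  by (simp add: algebra_simps sum_subtractf sum_distrib_left sum_divide_distrib)

lemma mulv_schur_lift_0:
  assumes "hermitian_fun (Suc n) A" "psd_fun (Suc n) A"
  shows "mulv (Suc n) A (schur_lift n A x) 0 = 0"
proof (cases "A 0 0 = 0")
  case True
  have "(\<Sum>j<n. A 0 (Suc j) * x j) = 0"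
    by (intro sum.neutral) (simp add: psd_diag_0_imp_col_0(2)[OF assms zero_less_Suc True])
  thus ?thesis unfolding schur_lift_def mulv_vcons using True by simp
qed (simp add: schur_lift_def mulv_vcons)

lemma quad_form_schur_complement:
  assumes "hermitian_fun (Suc n) A" "psd_fun (Suc n) A"
  shows "quad_form n (schur_complement A) x = quad_form (Suc n) A (schur_lift n A x)"
proof -
  let ?y = "schur_lift n A x"
  have "quad_form (Suc n) A ?y = cnj (?y 0) * mulv (Suc n) A ?y 0
      + (\<Sum>i<n. cnj (?y (Suc i)) * mulv (Suc n) A ?y (Suc i))"
    unfolding quad_form_eq_sum_mulv by (rule sum.lessThan_Suc_shift)
  also have "\<dots> = (\<Sum>i<n. cnj (x i) * mulv n (schur_complement A) x i)"
    using mulv_schur_lift_0[OF assms] mulv_schur_lift_Suc by (simp add: schur_lift_def)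
  finally show ?thesis unfolding quad_form_eq_sum_mulv ..
qed

lemma hermitian_schur_complement:
  assumes "hermitian_fun (Suc n) A"
  shows "hermitian_fun n (schur_complement A)"
  unfolding hermitian_fun_def
proof (intro allI impI)
  fix i j assume "i < n" "j < n"
  hence "A (Suc j) (Suc i) = cnj (A (Suc i) (Suc j))" "A (Suc j) 0 = cnj (A 0 (Suc j))"
    "A 0 (Suc i) = cnj (A (Suc i) 0)" "cnj (A 0 0) = A 0 0"
    by (auto intro!: hermitian_funD[OF assms] hermitian_funD[OF assms, symmetric])
  thus "schur_complement A j i = cnj (schur_complement A i j)"
    unfolding schur_complement_def by (simp add: mult.commute)
qed

lemma psd_schur_complement:
  assumes "hermitian_fun (Suc n) A" "psd_fun (Suc n) A"
  shows "psd_fun n (schur_complement A)"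
  unfolding psd_fun_def quad_form_schur_complement[OF assms] using psd_funD[OF assms(2)] by blast

lemma orthogonal_fun_vcons:
  "orthogonal_fun (Suc n) y (vcons c x) \<longleftrightarrow> y 0 * cnj c + (\<Sum>i<n. y (Suc i) * cnj (x i)) = 0"
  unfolding orthogonal_fun_def using sum_lessThan_Suc_vcons[where f = "\<lambda>j z. y j * cnj z"] by simp

lemma psd_orthogonal_kernel_imp_in_range:
  assumes "hermitian_fun n A" "psd_fun n A"
    and "\<And>x. in_kernel n A x \<Longrightarrow> orthogonal_fun n y x"
  shows "\<exists>x. \<forall>i<n. mulv n A x i = y i"
  using assms
proof (induction n arbitrary: A y)
  case 0
  thus ?case by simp
next
  case (Suc n A y)
  note h = Suc.prems(1) and p = Suc.prems(2) and ker = Suc.prems(3)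
  define a where "a = A 0 0"
  define b where "b x = (\<Sum>j<n. A 0 (Suc j) * x j)" for x
  define y' where "y' i = y (Suc i) - y 0 * A (Suc i) 0 / a" for i
  have a_real: "cnj a = a" unfolding a_def by (rule hermitian_funD[OF h, symmetric]) simp_all
  have ker': "orthogonal_fun n y' x" if x: "in_kernel n (schur_complement A) x" for x
  proof -
    have "in_kernel (Suc n) A (schur_lift n A x)"
      unfolding in_kernel_def
    proof (intro allI impI)
      fix i assume "i < Suc n"
      thus "mulv (Suc n) A (schur_lift n A x) i = 0"
        using x mulv_schur_lift_0[OF h p] mulv_schur_lift_Suc
        unfolding in_kernel_def by (cases i) auto
    qed
    hence "orthogonal_fun (Suc n) y (schur_lift n A x)" by (rule ker)
    hence orth: "y 0 * cnj (- b x / a) + (\<Sum>i<n. y (Suc i) * cnj (x i)) = 0"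
      unfolding schur_lift_def orthogonal_fun_vcons b_def a_def .
    have "cnj (b x) = (\<Sum>j<n. A (Suc j) 0 * cnj (x j))"
      unfolding b_def by (auto simp: hermitian_funD[OF h, of 0] intro!: sum.cong)
    hence "(\<Sum>i<n. y' i * cnj (x i))
        = (\<Sum>i<n. y (Suc i) * cnj (x i)) - y 0 / a * cnj (b x)"
      unfolding y'_def by (simp add: algebra_simps sum_subtractf sum_distrib_left)
    also have "\<dots> = 0" using orth a_real by (simp add: add.commute)
    finally show ?thesis unfolding orthogonal_fun_def .
  qed
  obtain x where x: "\<And>i. i < n \<Longrightarrow> mulv n (schur_complement A) x i = y' i"
    using Suc.IH[OF hermitian_schur_complement[OF h] psd_schur_complement[OF h p] ker'] by blast
  define c where "c = (y 0 - b x) / a"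
  have row_0: "mulv (Suc n) A (vcons c x) 0 = y 0"
  proof (cases "a = 0")
    case True
    note col_0 = psd_diag_0_imp_col_0[OF h p zero_less_Suc True[unfolded a_def]]
    have "in_kernel (Suc n) A (vcons 1 (\<lambda>_. 0))"
      unfolding in_kernel_def mulv_vcons using col_0(1) by simp
    hence "orthogonal_fun (Suc n) y (vcons 1 (\<lambda>_. 0))" by (rule ker)
    hence "y 0 = 0" unfolding orthogonal_fun_vcons by simp
    moreover have "(\<Sum>j<n. A 0 (Suc j) * x j) = 0" by (intro sum.neutral) (simp add: col_0(2))
    ultimately show ?thesis unfolding mulv_vcons using True by (simp add: a_def)
  next
    case False
    thus ?thesis unfolding mulv_vcons c_def b_def a_def by simp
  qed
  have row_Suc: "mulv (Suc n) A (vcons c x) (Suc i) = y (Suc i)" if "i < n" for i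
  proof -
    have "mulv (Suc n) A (vcons c x) (Suc i)
        = A (Suc i) 0 * (c + b x / a) + mulv (Suc n) A (schur_lift n A x) (Suc i)"
      unfolding schur_lift_def mulv_vcons b_def a_def by (simp add: algebra_simps)
    also have "c + b x / a = y 0 / a" unfolding c_def by (simp add: diff_divide_distrib)
    also have "mulv (Suc n) A (schur_lift n A x) (Suc i) = y' i"
      using mulv_schur_lift_Suc x[OF that] by simp
    finally show ?thesis unfolding y'_def by simp
  qed
  show ?case
  proof (intro exI allI impI)
    fix i assume "i < Suc n"
    thus "mulv (Suc n) A (vcons c x) i = y i" using row_0 row_Suc by (cases i) auto
  qed
qed

lemma kernel_subset_imp_range_subset:
  assumes "hermitian_fun n A" "psd_fun n A" "hermitian_fun n B"
    and "\<And>x. in_kernel n A x \<Longrightarrow> in_kernel n B x"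
  shows "\<exists>x. \<forall>i<n. mulv n A x i = mulv n B v i"
proof (rule psd_orthogonal_kernel_imp_in_range[OF assms(1,2)])
  fix x assume "in_kernel n A x"
  hence "\<forall>j<n. mulv n B x j = 0" using assms(4) unfolding in_kernel_def by blast
  thus "orthogonal_fun n (mulv n B v) x"
    unfolding orthogonal_fun_def inner_mulv_hermitian[OF assms(3)] by simp
qed

abbreviation entries :: "complex mat \<Rightarrow> nat \<Rightarrow> nat \<Rightarrow> complex" where
  "entries M \<equiv> \<lambda>i j. M $$ (i, j)"

lemma mat_adjoint_carrier: "A \<in> carrier_mat n m \<Longrightarrow> mat_adjoint A \<in> carrier_mat m n"
  unfolding mat_adjoint_def by (simp add: mat_of_rows_def)

lemma mat_adjoint_index:
  "A \<in> carrier_mat n m \<Longrightarrow> i < m \<Longrightarrow> j < n \<Longrightarrow> mat_adjoint A $$ (i, j) = cnj (A $$ (j, i))"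
  unfolding mat_adjoint_def by (simp add: mat_of_rows_index)

lemma mult_mat_vec_eq_mulv:
  "M \<in> carrier_mat n n \<Longrightarrow> v \<in> carrier_vec n \<Longrightarrow> i < n \<Longrightarrow>
    (M *\<^sub>v v) $ i = mulv n (entries M) (\<lambda>j. v $ j) i"
  unfolding mulv_def by (simp add: scalar_prod_def atLeast0LessThan mult.commute)

lemma mult_mat_vec_vec_eq_mulv:
  assumes "M \<in> carrier_mat n n" "i < n"
  shows "(M *\<^sub>v vec n x) $ i = mulv n (entries M) x i"
proof -
  have "(M *\<^sub>v vec n x) $ i = mulv n (entries M) (\<lambda>j. vec n x $ j) i"
    using assms by (rule mult_mat_vec_eq_mulv[OF _ vec_carrier])
  also have "\<dots> = mulv n (entries M) x i" unfolding mulv_def by (intro sum.cong refl) simp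
  finally show ?thesis .
qed

lemma cscalar_prod_eq_quad_form:
  assumes "M \<in> carrier_mat n n" "v \<in> carrier_vec n"
  shows "(M *\<^sub>v v) \<bullet>c v = quad_form n (entries M) (\<lambda>i. v $ i)"
proof -
  have "(M *\<^sub>v v) \<bullet>c v = (\<Sum>i<n. (M *\<^sub>v v) $ i * cnj (v $ i))"
    using assms by (simp add: scalar_prod_def atLeast0LessThan)
  also have "\<dots> = (\<Sum>i<n. cnj (v $ i) * mulv n (entries M) (\<lambda>j. v $ j) i)"
    by (intro sum.cong refl) (simp add: mult_mat_vec_eq_mulv[OF assms] mult.commute del: index_mult_mat_vec)
  finally show ?thesis unfolding quad_form_eq_sum_mulv .
qed

lemma psd_mat_iff:
  "psd_mat n M \<longleftrightarrow> M \<in> carrier_mat n n \<and> hermitian_fun n (entries M) \<and> psd_fun n (entries M)"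
proof (cases "M \<in> carrier_mat n n")
  case M: True
  have "mat_adjoint M = M \<longleftrightarrow> hermitian_fun n (entries M)"
  proof
    assume a: "mat_adjoint M = M"
    show "hermitian_fun n (entries M)"
      unfolding hermitian_fun_def
    proof (intro allI impI)
      fix i j assume "i < n" "j < n"
      thus "M $$ (j, i) = cnj (M $$ (i, j))" using mat_adjoint_index[OF M, of j i] a by simp
    qed
  next
    assume h: "hermitian_fun n (entries M)"
    show "mat_adjoint M = M"
    proof (rule eq_matI)
      fix i j assume "i < dim_row M" "j < dim_col M"
      hence "i < n" "j < n" using M by auto
      thus "mat_adjoint M $$ (i, j) = M $$ (i, j)"
        using mat_adjoint_index[OF M] hermitian_funD[OF h, of j i] by simp
    qed (use M mat_adjoint_carrier[OF M] in auto)
  qed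
  moreover have "(\<forall>v \<in> carrier_vec n. 0 \<le> Re ((M *\<^sub>v v) \<bullet>c v)) \<longleftrightarrow> psd_fun n (entries M)"
  proof
    assume pos: "\<forall>v \<in> carrier_vec n. 0 \<le> Re ((M *\<^sub>v v) \<bullet>c v)"
    have "0 \<le> Re (quad_form n (entries M) (\<lambda>i. vec n v $ i))" for v
      using pos[rule_format, OF vec_carrier] unfolding cscalar_prod_eq_quad_form[OF M vec_carrier] .
    moreover have "quad_form n (entries M) (\<lambda>i. vec n v $ i) = quad_form n (entries M) v" for v
      unfolding quad_form_def by (intro sum.cong refl) simp
    ultimately show "psd_fun n (entries M)" unfolding psd_fun_def by simp
  qed (simp add: cscalar_prod_eq_quad_form[OF M] psd_funD)
  ultimately show ?thesis using M unfolding psd_mat_def by simp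
qed (simp add: psd_mat_def)

lemma densityD:
  assumes "density d X"
  shows "X \<in> carrier_mat d d" "hermitian_fun d (entries X)" "psd_fun d (entries X)"
    "(\<Sum>i<d. Re (X $$ (i, i))) = 1"
proof -
  show X: "X \<in> carrier_mat d d" "hermitian_fun d (entries X)" "psd_fun d (entries X)"
    using assms unfolding density_def psd_mat_iff by auto
  have "(\<Sum>i<d. X $$ (i, i)) = 1" using assms X unfolding density_def mtrace_def by simp
  hence "Re (\<Sum>i<d. X $$ (i, i)) = 1" by simp
  thus "(\<Sum>i<d. Re (X $$ (i, i))) = 1" by (simp add: Re_sum)
qed

lemma density_diag_nonneg:
  assumes "density d X" "i < d"
  shows "0 \<le> Re (X $$ (i, i))"
proof -
  have "0 \<le> Re (quad_form d (entries X) (\<lambda>j. if j = i then 1 else 0))"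
    by (rule psd_funD[OF densityD(3)[OF assms(1)]])
  thus ?thesis unfolding quad_form_unit[OF assms(2)] .
qed

lemma energy_eq_sum_diag:
  assumes "X \<in> carrier_mat d d"
  shows "energy d E X = (\<Sum>i<d. E i * Re (X $$ (i, i)))"
proof -
  have "hamiltonian d E * X = mat d d (\<lambda>(i, j). complex_of_real (E i) * X $$ (i, j))"
    unfolding hamiltonian_def by (rule mat_diag_mult_left[OF assms])
  hence "mtrace (hamiltonian d E * X) = (\<Sum>i<d. complex_of_real (E i) * X $$ (i, i))"
    unfolding mtrace_def by simp
  thus ?thesis unfolding energy_def by (simp add: Re_sum)
qed

lemma unitaryD:
  assumes "unitary_mat d U"
  shows "U \<in> carrier_mat d d" "mat_adjoint U * U = 1\<^sub>m d" "U * mat_adjoint U = 1\<^sub>m d"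
proof -
  show U: "U \<in> carrier_mat d d" and a: "mat_adjoint U * U = 1\<^sub>m d"
    using assms unfolding unitary_mat_def by auto
  show "U * mat_adjoint U = 1\<^sub>m d"
    by (rule mat_mult_left_right_inverse[OF mat_adjoint_carrier[OF U] U a])
qed

lemma mat_adjoint_one: "mat_adjoint (1\<^sub>m d) = (1\<^sub>m d :: complex mat)"
  by (rule eq_matI)
    (auto simp: mat_adjoint_index[OF one_carrier_mat] carrier_matD[OF mat_adjoint_carrier[OF one_carrier_mat]])

lemma unitary_one: "unitary_mat d (1\<^sub>m d)"
  unfolding unitary_mat_def mat_adjoint_one by simp

lemma of_real_cmod_square: "complex_of_real ((cmod z)\<^sup>2) = cnj z * z"
  using complex_norm_square[of z] by (simp add: mult.commute)

lemma unitary_cols_orthonormal: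
  assumes "unitary_mat d U" "l < d" "k < d"
  shows "(\<Sum>i<d. cnj (U $$ (i, l)) * U $$ (i, k)) = (if l = k then 1 else 0)"
proof -
  note U = unitaryD[OF assms(1)]
  have "(mat_adjoint U * U) $$ (l, k) = (\<Sum>i<d. cnj (U $$ (i, l)) * U $$ (i, k))"
    using U(1) mat_adjoint_carrier[OF U(1)] assms(2,3)
    by (simp add: scalar_prod_def atLeast0LessThan mat_adjoint_index)
  thus ?thesis using U(2) assms(2,3) by simp
qed

lemma unitary_col_norm:
  assumes "unitary_mat d U" "k < d"
  shows "(\<Sum>i<d. (cmod (U $$ (i, k)))\<^sup>2) = 1"
proof -
  have "complex_of_real (\<Sum>i<d. (cmod (U $$ (i, k)))\<^sup>2) = (\<Sum>i<d. cnj (U $$ (i, k)) * U $$ (i, k))"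
    unfolding of_real_sum of_real_cmod_square ..
  also have "\<dots> = 1" using unitary_cols_orthonormal[OF assms(1,2,2)] by simp
  finally show ?thesis by (simp only: of_real_eq_1_iff)
qed

lemma unitary_row_norm:
  assumes "unitary_mat d U" "i < d"
  shows "(\<Sum>k<d. (cmod (U $$ (i, k)))\<^sup>2) = 1"
proof -
  note U = unitaryD[OF assms(1)]
  have "complex_of_real (\<Sum>k<d. (cmod (U $$ (i, k)))\<^sup>2) = (\<Sum>k<d. U $$ (i, k) * cnj (U $$ (i, k)))"
    unfolding of_real_sum of_real_cmod_square by (simp add: mult.commute)
  also have "\<dots> = (U * mat_adjoint U) $$ (i, i)"
    using U(1) mat_adjoint_carrier[OF U(1)] assms(2)
    by (simp add: scalar_prod_def atLeast0LessThan mat_adjoint_index)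
  also have "\<dots> = 1" using U(3) assms(2) by simp
  finally show ?thesis by (simp only: of_real_eq_1_iff)
qed

lemma sum_quad_form_unitary_rows:
  assumes "unitary_mat d U"
  shows "(\<Sum>i<d. quad_form d A (\<lambda>k. cnj (U $$ (i, k)))) = (\<Sum>k<d. A k k)"
proof -
  have "(\<Sum>i<d. quad_form d A (\<lambda>k. cnj (U $$ (i, k))))
      = (\<Sum>i<d. \<Sum>k<d. \<Sum>l<d. A k l * (cnj (U $$ (i, l)) * U $$ (i, k)))"
    unfolding quad_form_def by (intro sum.cong refl) (simp add: mult_ac)
  also have "\<dots> = (\<Sum>k<d. \<Sum>l<d. \<Sum>i<d. A k l * (cnj (U $$ (i, l)) * U $$ (i, k)))"
    by (subst sum.swap) (intro sum.cong refl sum.swap)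
  also have "\<dots> = (\<Sum>k<d. \<Sum>l<d. if l = k then A k l else 0)"
    unfolding sum_distrib_left[symmetric]
    by (intro sum.cong refl) (simp add: unitary_cols_orthonormal[OF assms])
  also have "\<dots> = (\<Sum>k<d. A k k)" by simp
  finally show ?thesis .
qed

lemma conj_unitary_diag:
  assumes U: "U \<in> carrier_mat d d" and X: "X \<in> carrier_mat d d" and i: "i < d"
  shows "(U * X * mat_adjoint U) $$ (i, i) = quad_form d (entries X) (\<lambda>k. cnj (U $$ (i, k)))"
proof -
  have "(U * X * mat_adjoint U) $$ (i, i) = (\<Sum>k<d. U $$ (i, k) * (\<Sum>l<d. X $$ (k, l) * cnj (U $$ (i, l))))"
    using U X mat_adjoint_carrier[OF U] i
    by (simp add: scalar_prod_def atLeast0LessThan mat_adjoint_index)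
  also have "\<dots> = quad_form d (entries X) (\<lambda>k. cnj (U $$ (i, k)))"
    unfolding quad_form_def by (simp add: sum_distrib_left mult.assoc)
  finally show ?thesis .
qed

text \<open>The population of level \<open>i\<close> in \<open>U X U\<^sup>\<dagger>\<close> (see \<open>conj_unitary_diag\<close>), written so
  that it is visibly linear in \<open>X\<close>.\<close>
definition rotated_population :: "nat \<Rightarrow> complex mat \<Rightarrow> complex mat \<Rightarrow> nat \<Rightarrow> real" where
  "rotated_population d U X i = Re (quad_form d (entries X) (\<lambda>k. cnj (U $$ (i, k))))"

lemma energy_unitary_conj:
  assumes "U \<in> carrier_mat d d" "X \<in> carrier_mat d d"
  shows "energy d E (U * X * mat_adjoint U) = (\<Sum>i<d. E i * rotated_population d U X i)"
proof -
  have UXU: "U * X * mat_adjoint U \<in> carrier_mat d d" using assms mat_adjoint_carrier[OF assms(1)] by simp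
  show ?thesis unfolding energy_eq_sum_diag[OF UXU] rotated_population_def
    by (intro sum.cong refl) (simp add: conj_unitary_diag[OF assms] del: index_mult_mat)
qed

lemma rotated_population_nonneg: "density d X \<Longrightarrow> 0 \<le> rotated_population d U X i"
  unfolding rotated_population_def by (rule psd_funD[OF densityD(3)])

lemma sum_rotated_population:
  assumes "density d X" "unitary_mat d U"
  shows "(\<Sum>i<d. rotated_population d U X i) = 1"
proof -
  have "(\<Sum>i<d. rotated_population d U X i) = Re (\<Sum>k<d. X $$ (k, k))"
    unfolding rotated_population_def Re_sum[symmetric] sum_quad_form_unitary_rows[OF assms(2)] ..
  thus ?thesis using densityD(4)[OF assms(1)] by simp
qed

lemma rotated_population_lincomb:
  assumes "\<And>k l. k < d \<Longrightarrow> l < d \<Longrightarrow>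
      X $$ (k, l) = complex_of_real a * Y $$ (k, l) + complex_of_real b * Z $$ (k, l)"
  shows "rotated_population d U X i = a * rotated_population d U Y i + b * rotated_population d U Z i"
  unfolding rotated_population_def by (simp add: quad_form_lincomb[OF assms])

lemma sum_mult_by_parts:
  fixes e x :: "nat \<Rightarrow> real"
  shows "(\<Sum>i<Suc n. e i * x i)
    = e n * (\<Sum>i<Suc n. x i) - (\<Sum>j<n. (e (Suc j) - e j) * (\<Sum>i<Suc j. x i))"
proof (induction n)
  case (Suc n)
  have "(\<Sum>i<Suc (Suc n). e i * x i) = (\<Sum>i<Suc n. e i * x i) + e (Suc n) * x (Suc n)"
    by simp
  also have "\<dots> = e (Suc n) * (\<Sum>i<Suc (Suc n). x i)
      - (\<Sum>j<Suc n. (e (Suc j) - e j) * (\<Sum>i<Suc j. x i))"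
    unfolding Suc.IH by (simp add: algebra_simps)
  finally show ?case .
qed simp

text \<open>By Abel summation the difference is \<open>\<Sum>j. (e (j+1) - e j) * D j\<close>, where \<open>D\<close> are the partial
  sums of \<open>r - x\<close>; each \<open>D j\<close> is at most \<open>b\<close> below \<open>m\<close> and at most \<open>0\<close> from \<open>m\<close> on.\<close>
lemma weighted_sum_diff_le_of_partial_sums:
  fixes e x r :: "nat \<Rightarrow> real"
  assumes m: "m < d" and b: "0 \<le> b"
    and mono: "\<And>j. Suc j < d \<Longrightarrow> e j \<le> e (Suc j)"
    and total: "(\<Sum>i<d. x i) = (\<Sum>i<d. r i)"
    and low: "\<And>j. j < m \<Longrightarrow> (\<Sum>i<Suc j. r i) - (\<Sum>i<Suc j. x i) \<le> b"
    and high: "\<And>j. m \<le> j \<Longrightarrow> j < d \<Longrightarrow> (\<Sum>i<Suc j. r i) \<le> (\<Sum>i<Suc j. x i)"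
  shows "(\<Sum>i<d. e i * x i) - (\<Sum>i<d. e i * r i) \<le> b * (e m - e 0)"
proof -
  obtain n where d: "d = Suc n" using m by (cases d) auto
  define D where "D j = (\<Sum>i<Suc j. r i) - (\<Sum>i<Suc j. x i)" for j
  have "(\<Sum>i<d. e i * x i) - (\<Sum>i<d. e i * r i) = - (\<Sum>i<Suc n. e i * (r i - x i))"
    unfolding d by (simp add: sum_subtractf algebra_simps)
  also have "\<dots> = (\<Sum>j<n. (e (Suc j) - e j) * D j) - e n * D n"
    unfolding sum_mult_by_parts D_def by (simp add: sum_subtractf)
  also have "D n = 0" unfolding D_def using total d by simp
  also have "(\<Sum>j<n. (e (Suc j) - e j) * D j) - e n * 0 = (\<Sum>j<n. (e (Suc j) - e j) * D j)"
    by simp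
  also have "\<dots> \<le> (\<Sum>j<n. if j < m then (e (Suc j) - e j) * b else 0)"
  proof (rule sum_mono)
    fix j assume "j \<in> {..<n}"
    hence "0 \<le> e (Suc j) - e j" and "D j \<le> (if j < m then b else 0)"
      using mono low high d unfolding D_def by (auto simp: not_less)
    hence "(e (Suc j) - e j) * D j \<le> (e (Suc j) - e j) * (if j < m then b else 0)"
      by (rule mult_left_mono[rotated])
    thus "(e (Suc j) - e j) * D j \<le> (if j < m then (e (Suc j) - e j) * b else 0)"
      by (cases "j < m") simp_all
  qed
  also have "\<dots> = sum (\<lambda>j. (e (Suc j) - e j) * b) ({..<n} \<inter> {j. j < m})"
    by (simp add: sum.inter_restrict)
  also have "{..<n} \<inter> {j. j < m} = {..<m}" using m d by auto
  also have "(\<Sum>j<m. (e (Suc j) - e j) * b) = b * (e m - e 0)"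
    by (simp add: sum_distrib_right[symmetric] sum_lessThan_telescope)
  finally show ?thesis .
qed

lemma weighted_sum_le_prefix_sum:
  fixes p c :: "nat \<Rightarrow> real"
  assumes j: "j < d" and dec: "\<And>k l. k \<le> l \<Longrightarrow> l < d \<Longrightarrow> p l \<le> p k"
    and p0: "\<And>k. k < d \<Longrightarrow> 0 \<le> p k"
    and c01: "\<And>k. k < d \<Longrightarrow> 0 \<le> c k \<and> c k \<le> 1"
    and csum: "(\<Sum>k<d. c k) \<le> Suc j"
  shows "(\<Sum>k<d. p k * c k) \<le> (\<Sum>k<Suc j. p k)"
proof -
  define ind where "ind k = (if k < Suc j then 1 else 0 :: real)" for k
  have sum_ind: "(\<Sum>k<d. f k * ind k) = (\<Sum>k<Suc j. f k)" for f
  proof -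
    have "(\<Sum>k<d. f k * ind k) = (\<Sum>k<d. if k < Suc j then f k else 0)"
      by (intro sum.cong) (auto simp: ind_def)
    also have "\<dots> = sum f ({..<d} \<inter> {k. k < Suc j})"
      by (simp add: sum.inter_restrict)
    also have "{..<d} \<inter> {k. k < Suc j} = {..<Suc j}" using j by auto
    finally show ?thesis .
  qed
  have "(\<Sum>k<d. p k * c k) - (\<Sum>k<Suc j. p k)
      = (\<Sum>k<d. (p k - p j) * (c k - ind k)) + p j * ((\<Sum>k<d. c k) - (\<Sum>k<d. 1 * ind k))"
    unfolding sum_ind[symmetric]
    by (simp add: sum_subtractf[symmetric] sum_distrib_left sum.distrib[symmetric] algebra_simps)
  also have "\<dots> \<le> 0 + 0"
  proof (rule add_mono)
    show "(\<Sum>k<d. (p k - p j) * (c k - ind k)) \<le> 0"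
    proof (rule sum_nonpos)
      fix k assume k: "k \<in> {..<d}"
      show "(p k - p j) * (c k - ind k) \<le> 0"
      proof (cases "k < Suc j")
        case True
        thus ?thesis using dec[of k j] j c01[of k] k unfolding ind_def
          by (simp add: mult_nonneg_nonpos)
      next
        case False
        thus ?thesis using dec[of j k] c01[of k] k unfolding ind_def
          by (simp add: mult_nonpos_nonneg)
      qed
    qed
    show "p j * ((\<Sum>k<d. c k) - (\<Sum>k<d. 1 * ind k)) \<le> 0"
      using p0[OF j] csum unfolding sum_ind by (simp add: mult_nonneg_nonpos)
  qed
  finally show ?thesis by simp
qed

lemma quad_form_diag:
  "quad_form n (\<lambda>k l. if k = l then p k else 0) u = (\<Sum>k<n. of_real ((cmod (u k))\<^sup>2) * p k)"
proof -
  have "mulv n (\<lambda>k l. if k = l then p k else 0) u k = p k * u k" if "k < n" for k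
    unfolding mulv_def using that by (simp add: if_distrib[of "\<lambda>z. z * _"] cong: if_cong)
  thus ?thesis
    unfolding quad_form_eq_sum_mulv of_real_cmod_square by (intro sum.cong refl) (simp add: mult_ac)
qed

lemma passive_stateE:
  assumes "passive_state d \<tau>"
  obtains p where "\<tau> = mat_diag d (\<lambda>i. complex_of_real (p i))"
    "\<And>i j. i \<le> j \<Longrightarrow> j < d \<Longrightarrow> p j \<le> p i" "\<And>i. i < d \<Longrightarrow> 0 \<le> p i"
proof -
  obtain p where \<tau>: "\<tau> = mat_diag d (\<lambda>i. complex_of_real (p i))"
    and dec: "\<And>i j. i \<le> j \<Longrightarrow> j < d \<Longrightarrow> p j \<le> p i"
    using assms unfolding passive_state_def by blast
  have "0 \<le> p i" if "i < d" for i
    using density_diag_nonneg[of d \<tau> i] assms that unfolding passive_state_def \<tau>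
    by (simp add: mat_diag_def)
  with \<tau> dec show ?thesis by (rule that)
qed

lemma passive_state_diagI:
  assumes dec: "\<And>i j. i \<le> j \<Longrightarrow> j < d \<Longrightarrow> p j \<le> p i"
    and p0: "\<And>i. i < d \<Longrightarrow> 0 \<le> p i" and p1: "(\<Sum>i<d. p i) = 1"
  shows "passive_state d (mat_diag d (\<lambda>i. complex_of_real (p i)))"
proof -
  let ?T = "mat_diag d (\<lambda>i. complex_of_real (p i))"
  have T: "quad_form d (entries ?T) v = quad_form d (\<lambda>k l. if k = l then complex_of_real (p k) else 0) v"
    for v unfolding quad_form_def by (intro sum.cong refl) (simp add: mat_diag_def)
  have "psd_fun d (entries ?T)"
    unfolding psd_fun_def T quad_form_diag using p0 by (auto simp: Re_sum intro!: sum_nonneg)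
  moreover have "hermitian_fun d (entries ?T)" unfolding hermitian_fun_def by (simp add: mat_diag_def)
  moreover have "mtrace ?T = 1"
    unfolding mtrace_def using p1 by (simp add: mat_diag_def flip: of_real_sum)
  ultimately show ?thesis
    unfolding passive_state_def density_def psd_mat_iff using dec by auto
qed

lemma rotated_population_diag:
  "rotated_population d U (mat_diag d (\<lambda>i. complex_of_real (p i))) i
    = (\<Sum>k<d. (cmod (U $$ (i, k)))\<^sup>2 * p k)"
proof -
  have "quad_form d (entries (mat_diag d (\<lambda>i. complex_of_real (p i)))) (\<lambda>k. cnj (U $$ (i, k)))
      = quad_form d (\<lambda>k l. if k = l then complex_of_real (p k) else 0) (\<lambda>k. cnj (U $$ (i, k)))"
    unfolding quad_form_def by (intro sum.cong refl) (simp add: mat_diag_def)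
  thus ?thesis unfolding rotated_population_def quad_form_diag by (simp add: Re_sum)
qed

text \<open>Ky Fan's maximum principle, for a diagonal state with decreasing populations.\<close>
lemma passive_prefix_rotated_population_le:
  assumes "passive_state d \<tau>" "unitary_mat d U" "j < d"
  shows "(\<Sum>i<Suc j. rotated_population d U \<tau> i) \<le> (\<Sum>i<Suc j. Re (\<tau> $$ (i, i)))"
proof -
  obtain p where \<tau>: "\<tau> = mat_diag d (\<lambda>i. complex_of_real (p i))"
    and dec: "\<And>i j. i \<le> j \<Longrightarrow> j < d \<Longrightarrow> p j \<le> p i" and p0: "\<And>i. i < d \<Longrightarrow> 0 \<le> p i"
    using passive_stateE[OF assms(1)] by blast
  define c where "c k = (\<Sum>i<Suc j. (cmod (U $$ (i, k)))\<^sup>2)" for k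
  have "(\<Sum>i<Suc j. rotated_population d U \<tau> i) = (\<Sum>k<d. p k * c k)"
    unfolding \<tau> rotated_population_diag c_def sum_distrib_left
    by (subst sum.swap) (simp add: mult.commute)
  also have "\<dots> \<le> (\<Sum>k<Suc j. p k)"
  proof (rule weighted_sum_le_prefix_sum[OF assms(3) dec p0])
    fix k assume k: "k < d"
    have "c k \<le> (\<Sum>i<d. (cmod (U $$ (i, k)))\<^sup>2)"
      unfolding c_def using assms(3) by (intro sum_mono2) auto
    thus "0 \<le> c k \<and> c k \<le> 1" unfolding unitary_col_norm[OF assms(2) k] by (simp add: c_def sum_nonneg)
  next
    have "(\<Sum>k<d. c k) = (\<Sum>i<Suc j. \<Sum>k<d. (cmod (U $$ (i, k)))\<^sup>2)"
      unfolding c_def by (rule sum.swap)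
    also have "\<dots> = Suc j"
      using assms(3) by (simp add: unitary_row_norm[OF assms(2)])
    finally show "(\<Sum>k<d. c k) \<le> Suc j" by simp
  qed
  also have "\<dots> = (\<Sum>i<Suc j. Re (\<tau> $$ (i, i)))"
    unfolding \<tau> using assms(3) by (intro sum.cong refl) (simp add: mat_diag_def)
  finally show ?thesis .
qed

lemma supp_subset_of_mixture:
  assumes \<rho>: "psd_mat d \<rho>" and \<sigma>: "psd_mat d \<sigma>" and \<tau>: "psd_mat d \<tau>"
    and a: "0 < a" and b: "0 \<le> b"
    and mix: "\<rho> = complex_of_real a \<cdot>\<^sub>m \<sigma> + complex_of_real b \<cdot>\<^sub>m \<tau>"
  shows "supp d \<sigma> \<subseteq> supp d \<rho>"
proof
  note \<rho>D = \<rho>[unfolded psd_mat_iff] and \<sigma>D = \<sigma>[unfolded psd_mat_iff] and \<tau>D = \<tau>[unfolded psd_mat_iff]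
  note \<rho>c = \<rho>D[THEN conjunct1] and \<sigma>c = \<sigma>D[THEN conjunct1]
  fix w assume "w \<in> supp d \<sigma>"
  then obtain v where w: "w = \<sigma> *\<^sub>v v" and v: "v \<in> carrier_vec d" unfolding supp_def by blast
  have lin: "\<rho> $$ (k, l) = complex_of_real a * \<sigma> $$ (k, l) + complex_of_real b * \<tau> $$ (k, l)"
    if "k < d" "l < d" for k l
    using \<sigma>c \<tau>D[THEN conjunct1] that by (simp add: mix)
  have ker: "in_kernel d (entries \<sigma>) x" if x: "in_kernel d (entries \<rho>) x" for x
  proof (rule psd_quad_form_0_imp_in_kernel)
    have "0 = Re (quad_form d (entries \<rho>) x)" using in_kernel_imp_quad_form_0[OF x] by simp
    also have "\<dots> = a * Re (quad_form d (entries \<sigma>) x) + b * Re (quad_form d (entries \<tau>) x)"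
      by (simp add: quad_form_lincomb[OF lin])
    finally have sum0: "a * Re (quad_form d (entries \<sigma>) x) + b * Re (quad_form d (entries \<tau>) x) = 0" ..
    have "0 \<le> a * Re (quad_form d (entries \<sigma>) x)" "0 \<le> b * Re (quad_form d (entries \<tau>) x)"
      using psd_funD[of d "entries \<sigma>" x] psd_funD[of d "entries \<tau>" x] \<sigma>D \<tau>D a b by simp_all
    hence "a * Re (quad_form d (entries \<sigma>) x) = 0" using sum0 by linarith
    thus "Re (quad_form d (entries \<sigma>) x) = 0" using a by simp
  qed (use \<sigma>D in auto)
  have "\<exists>x. \<forall>i<d. mulv d (entries \<rho>) x i = mulv d (entries \<sigma>) (\<lambda>j. v $ j) i"
    using \<rho>D \<sigma>D by (intro kernel_subset_imp_range_subset ker) auto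
  then obtain x where x: "\<forall>i<d. mulv d (entries \<rho>) x i = mulv d (entries \<sigma>) (\<lambda>j. v $ j) i" ..
  have "\<rho> *\<^sub>v vec d x = w"
  proof (rule eq_vecI)
    show "dim_vec (\<rho> *\<^sub>v vec d x) = dim_vec w" using \<rho>c \<sigma>c unfolding w by simp
    fix i assume "i < dim_vec w"
    hence i: "i < d" using \<sigma>c unfolding w by simp
    show "(\<rho> *\<^sub>v vec d x) $ i = w $ i"
      unfolding w mult_mat_vec_vec_eq_mulv[OF \<rho>c i] mult_mat_vec_eq_mulv[OF \<sigma>c v i]
      using x i by simp
  qed
  thus "w \<in> supp d \<rho>" unfolding supp_def using vec_carrier[of d x] by blast
qed

lemma sum_prefix_le_total:
  fixes f :: "nat \<Rightarrow> real"
  assumes "\<And>i. i < d \<Longrightarrow> 0 \<le> f i" "j < d"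
  shows "(\<Sum>i<Suc j. f i) \<le> (\<Sum>i<d. f i)"
  using assms by (intro sum_mono2) auto

lemma sum_prefix_eq_total:
  fixes f :: "nat \<Rightarrow> real"
  assumes "\<And>i. m < i \<Longrightarrow> i < d \<Longrightarrow> f i = 0" "m \<le> j" "j < d"
  shows "(\<Sum>i<Suc j. f i) = (\<Sum>i<d. f i)"
  using assms by (intro sum.mono_neutral_left) auto

lemma Re_quad_form_le:
  "Re (quad_form n A v) \<le> (\<Sum>i<n. \<Sum>j<n. cmod (A i j)) * (\<Sum>i<n. (cmod (v i))\<^sup>2)"
proof -
  define N where "N = (\<Sum>i<n. (cmod (v i))\<^sup>2)"
  have v_le: "(cmod (v i))\<^sup>2 \<le> N" if "i < n" for i
    unfolding N_def using that by (intro member_le_sum) auto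
  have "Re (quad_form n A v) \<le> (\<Sum>i<n. \<Sum>j<n. cmod (cnj (v i) * A i j * v j))"
    unfolding quad_form_def
    by (rule order.trans[OF complex_Re_le_cmod order.trans[OF norm_sum sum_mono[OF norm_sum]]])
  also have "\<dots> \<le> (\<Sum>i<n. \<Sum>j<n. cmod (A i j) * N)"
  proof (intro sum_mono)
    fix i j assume "i \<in> {..<n}" "j \<in> {..<n}"
    hence "2 * (cmod (v i) * cmod (v j)) \<le> 2 * N"
      using sum_squares_bound[of "cmod (v i)" "cmod (v j)"] v_le[of i] v_le[of j]
      by (simp add: power2_eq_square)
    hence "cmod (A i j) * (cmod (v i) * cmod (v j)) \<le> cmod (A i j) * N"
      by (intro mult_left_mono) auto
    thus "cmod (cnj (v i) * A i j * v j) \<le> cmod (A i j) * N"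
      by (simp add: norm_mult mult_ac)
  qed
  finally show ?thesis unfolding N_def by (simp add: sum_distrib_right)
qed

text \<open>Mixing \<open>\<rho>\<close> with \<open>t \<sigma>\<close>, \<open>\<sigma> = (c 1 - \<rho>) / t\<close>, \<open>t = d c - 1\<close>, gives the maximally mixed
  state; \<open>\<sigma> \<ge> 0\<close> as soon as \<open>c\<close> dominates the entrywise \<open>\<ell>\<^sub>1\<close> norm of \<open>\<rho>\<close>.\<close>
lemma robustness_witness_exists:
  assumes d: "0 < d" and \<rho>: "density d \<rho>"
  shows "\<exists>t \<sigma>. 0 \<le> t \<and> density d \<sigma> \<and>
    passive_state d (complex_of_real (1 / (1 + t)) \<cdot>\<^sub>m (\<rho> + complex_of_real t \<cdot>\<^sub>m \<sigma>))"
proof -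
  define c where "c = (\<Sum>i<d. \<Sum>j<d. cmod (\<rho> $$ (i, j))) + 2"
  define t where "t = real d * c - 1"
  have c2: "2 \<le> c" unfolding c_def by (simp add: sum_nonneg)
  moreover have "1 * c \<le> real d * c" using d c2 by (intro mult_right_mono) auto
  ultimately have t1: "1 \<le> t" unfolding t_def by linarith
  define \<sigma> where "\<sigma> = mat d d (\<lambda>(k, l).
      complex_of_real (c / t) * (if k = l then 1 else 0) + complex_of_real (- 1 / t) * \<rho> $$ (k, l))"
  have \<sigma>_entry: "\<sigma> $$ (k, l) =
      complex_of_real (c / t) * (if k = l then 1 else 0) + complex_of_real (- 1 / t) * \<rho> $$ (k, l)"
    if "k < d" "l < d" for k l
    using that unfolding \<sigma>_def by simp
  have \<sigma>_carrier: "\<sigma> \<in> carrier_mat d d" unfolding \<sigma>_def by simp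
  have "hermitian_fun d (entries \<sigma>)"
    unfolding hermitian_fun_def
  proof (intro allI impI)
    fix i j assume ij: "i < d" "j < d"
    have "\<rho> $$ (j, i) = cnj (\<rho> $$ (i, j))" by (rule hermitian_funD[OF densityD(2)[OF \<rho>] ij])
    thus "\<sigma> $$ (j, i) = cnj (\<sigma> $$ (i, j))" using ij by (simp add: \<sigma>_entry)
  qed
  moreover have "psd_fun d (entries \<sigma>)"
    unfolding psd_fun_def
  proof
    fix v
    define N where "N = (\<Sum>i<d. (cmod (v i))\<^sup>2)"
    have "quad_form d (\<lambda>k l. if k = l then 1 else 0) v = complex_of_real N"
      using quad_form_diag[of d "\<lambda>_. 1" v] unfolding N_def by simp
    hence \<sigma>_form: "Re (quad_form d (entries \<sigma>) v) = (c * N - Re (quad_form d (entries \<rho>) v)) / t"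
      by (simp add: quad_form_lincomb[OF \<sigma>_entry] diff_divide_distrib)
    have "(\<Sum>i<d. \<Sum>j<d. cmod (\<rho> $$ (i, j))) * N \<le> c * N"
      unfolding c_def N_def by (intro mult_right_mono sum_nonneg) auto
    hence "Re (quad_form d (entries \<rho>) v) \<le> c * N"
      using Re_quad_form_le[of d "entries \<rho>" v] unfolding N_def by linarith
    thus "0 \<le> Re (quad_form d (entries \<sigma>) v)" unfolding \<sigma>_form using t1 by simp
  qed
  moreover have "mtrace \<sigma> = 1"
  proof -
    have "mtrace \<sigma> = (\<Sum>i<d. complex_of_real (c / t) + complex_of_real (- 1 / t) * \<rho> $$ (i, i))"
      unfolding mtrace_def \<sigma>_def by simp
    also have "\<dots> = of_nat d * complex_of_real (c / t) + complex_of_real (- 1 / t) * (\<Sum>i<d. \<rho> $$ (i, i))"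
      by (simp add: sum.distrib sum_distrib_left sum_subtractf sum_negf)
    also have "(\<Sum>i<d. \<rho> $$ (i, i)) = 1"
      using \<rho> densityD(1)[OF \<rho>] unfolding density_def mtrace_def by simp
    also have "of_nat d * complex_of_real (c / t) + complex_of_real (- 1 / t) * 1
        = complex_of_real ((real d * c - 1) / t)"
      by (simp add: diff_divide_distrib)
    finally show ?thesis using t1 unfolding t_def by simp
  qed
  ultimately have \<sigma>_density: "density d \<sigma>"
    unfolding density_def psd_mat_iff \<sigma>_def by simp
  have "complex_of_real (1 / (1 + t)) \<cdot>\<^sub>m (\<rho> + complex_of_real t \<cdot>\<^sub>m \<sigma>)
      = mat_diag d (\<lambda>i. complex_of_real (1 / real d))"
  proof (rule eq_matI)
    fix k l assume "k < dim_row (mat_diag d (\<lambda>i. complex_of_real (1 / real d)))"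
      "l < dim_col (mat_diag d (\<lambda>i. complex_of_real (1 / real d)))"
    hence kl: "k < d" "l < d" by (simp_all add: mat_diag_def)
    have tc: "t * (c / t) = c" "t * (- 1 / t) = - 1" using t1 by auto
    have t\<sigma>: "complex_of_real t * \<sigma> $$ (k, l) = complex_of_real c * (if k = l then 1 else 0) - \<rho> $$ (k, l)"
      unfolding \<sigma>_entry[OF kl] distrib_left mult.assoc[symmetric] of_real_mult[symmetric] tc by simp
    have "c / (1 + t) = 1 / real d" using c2 unfolding t_def by simp
    hence cd: "complex_of_real c / (1 + complex_of_real t) = 1 / of_nat d"
      by (metis of_real_1 of_real_add of_real_divide of_real_of_nat_eq)
    show "(complex_of_real (1 / (1 + t)) \<cdot>\<^sub>m (\<rho> + complex_of_real t \<cdot>\<^sub>m \<sigma>)) $$ (k, l)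
        = mat_diag d (\<lambda>i. complex_of_real (1 / real d)) $$ (k, l)"
      using kl densityD(1)[OF \<rho>] \<sigma>_carrier cd by (simp add: t\<sigma> mat_diag_def)
  qed (use densityD(1)[OF \<rho>] \<sigma>_carrier in \<open>simp_all add: mat_diag_def\<close>)
  moreover have "passive_state d (mat_diag d (\<lambda>i. complex_of_real (1 / real d)))"
    using d by (intro passive_state_diagI) auto
  ultimately show ?thesis using \<sigma>_density t1 by (intro exI[of _ t] exI[of _ \<sigma>]) auto
qed

lemma le_cInf_mult:
  fixes S :: "real set"
  assumes "S \<noteq> {}" "0 \<le> c" "\<And>t. t \<in> S \<Longrightarrow> x \<le> t * c"
  shows "x \<le> Inf S * c"
proof (cases "c = 0")
  case True
  thus ?thesis using assms(1,3) by force
next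
  case False
  hence c: "0 < c" using assms(2) by simp
  have "x / c \<le> Inf S" using assms(1,3) c by (intro cInf_greatest) (auto simp: divide_le_eq)
  thus ?thesis using c by (simp add: divide_le_eq)
qed

locale level_energies =
  fixes d :: nat and E :: "nat \<Rightarrow> real"
  assumes dim_pos: "0 < d"
    and energy_mono: "\<And>i j. i \<le> j \<Longrightarrow> j < d \<Longrightarrow> E i \<le> E j"
begin

definition extracted_work :: "complex mat \<Rightarrow> complex mat \<Rightarrow> real" where
  "extracted_work U X = energy d E X - energy d E (U * X * mat_adjoint U)"

lemma extracted_work_eq:
  assumes "unitary_mat d U" "X \<in> carrier_mat d d"
  shows "extracted_work U X = (\<Sum>i<d. E i * Re (X $$ (i, i))) - (\<Sum>i<d. E i * rotated_population d U X i)"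
  unfolding extracted_work_def energy_eq_sum_diag[OF assms(2)]
    energy_unitary_conj[OF unitaryD(1)[OF assms(1)] assms(2)] ..

lemma extracted_work_lincomb:
  assumes "unitary_mat d U" "X \<in> carrier_mat d d" "Y \<in> carrier_mat d d" "Z \<in> carrier_mat d d"
    and lin: "\<And>k l. k < d \<Longrightarrow> l < d \<Longrightarrow>
      X $$ (k, l) = complex_of_real a * Y $$ (k, l) + complex_of_real b * Z $$ (k, l)"
  shows "extracted_work U X = a * extracted_work U Y + b * extracted_work U Z"
proof -
  have X_diag: "Re (X $$ (i, i)) = a * Re (Y $$ (i, i)) + b * Re (Z $$ (i, i))" if "i < d" for i
    using lin[OF that that] by simp
  have "(\<Sum>i<d. E i * Re (X $$ (i, i)))
      = (\<Sum>i<d. a * (E i * Re (Y $$ (i, i))) + b * (E i * Re (Z $$ (i, i))))"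
    by (intro sum.cong refl) (simp add: X_diag algebra_simps)
  also have "\<dots> = a * (\<Sum>i<d. E i * Re (Y $$ (i, i))) + b * (\<Sum>i<d. E i * Re (Z $$ (i, i)))"
    by (simp add: sum.distrib sum_distrib_left)
  finally have diag: "(\<Sum>i<d. E i * Re (X $$ (i, i)))
      = a * (\<Sum>i<d. E i * Re (Y $$ (i, i))) + b * (\<Sum>i<d. E i * Re (Z $$ (i, i)))" .
  have "(\<Sum>i<d. E i * rotated_population d U X i)
      = (\<Sum>i<d. a * (E i * rotated_population d U Y i) + b * (E i * rotated_population d U Z i))"
    by (intro sum.cong refl) (simp add: rotated_population_lincomb[OF lin] algebra_simps)
  also have "\<dots> = a * (\<Sum>i<d. E i * rotated_population d U Y i)
      + b * (\<Sum>i<d. E i * rotated_population d U Z i)"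
    by (simp add: sum.distrib sum_distrib_left)
  finally have rot: "(\<Sum>i<d. E i * rotated_population d U X i)
      = a * (\<Sum>i<d. E i * rotated_population d U Y i)
        + b * (\<Sum>i<d. E i * rotated_population d U Z i)" .
  show ?thesis
    unfolding extracted_work_eq[OF assms(1,2)] extracted_work_eq[OF assms(1,3)]
      extracted_work_eq[OF assms(1,4)] diag rot
    by (simp add: algebra_simps)
qed

lemma ground_energy_le:
  assumes "\<And>i. i < d \<Longrightarrow> 0 \<le> w i" "(\<Sum>i<d. w i) = 1"
  shows "E 0 \<le> (\<Sum>i<d. E i * w i)"
proof -
  have "E 0 = (\<Sum>i<d. E 0 * w i)" using assms(2) by (simp flip: sum_distrib_left)
  also have "\<dots> \<le> (\<Sum>i<d. E i * w i)"
    using assms(1) energy_mono[of 0] by (intro sum_mono mult_right_mono) auto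
  finally show ?thesis .
qed

lemma extracted_work_le_ergotropy:
  assumes X: "density d X" and U: "unitary_mat d U"
  shows "extracted_work U X \<le> ergotropy d E X"
proof -
  have "bdd_below ((\<lambda>U. energy d E (U * X * mat_adjoint U)) ` {U. unitary_mat d U})"
  proof (rule bdd_belowI2)
    fix V assume "V \<in> {U. unitary_mat d U}"
    hence V: "unitary_mat d V" by simp
    show "E 0 \<le> energy d E (V * X * mat_adjoint V)"
      unfolding energy_unitary_conj[OF unitaryD(1)[OF V] densityD(1)[OF X]]
      using rotated_population_nonneg[OF X] sum_rotated_population[OF X V] by (rule ground_energy_le)
  qed
  hence "(INF U \<in> {U. unitary_mat d U}. energy d E (U * X * mat_adjoint U))
      \<le> energy d E (U * X * mat_adjoint U)"
    by (rule cINF_lower) (use U in simp)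
  thus ?thesis unfolding ergotropy_def extracted_work_def by simp
qed

lemma ergotropy_le:
  assumes "\<And>U. unitary_mat d U \<Longrightarrow> extracted_work U X \<le> B"
  shows "ergotropy d E X \<le> B"
proof -
  have "energy d E X - B \<le> (INF U \<in> {U. unitary_mat d U}. energy d E (U * X * mat_adjoint U))"
    using assms unitary_one unfolding extracted_work_def by (intro cINF_greatest) force+
  thus ?thesis unfolding ergotropy_def by simp
qed

lemma ergotropy_nonneg: "density d X \<Longrightarrow> 0 \<le> ergotropy d E X"
  using extracted_work_le_ergotropy[OF _ unitary_one, of X] densityD(1)[of d X]
  by (simp add: extracted_work_def mat_adjoint_one)

lemma extracted_work_le_of_prefix:
  assumes X: "density d X" and U: "unitary_mat d U" and m: "m < d" and b: "0 \<le> b"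
    and tail: "\<And>i. m < i \<Longrightarrow> i < d \<Longrightarrow> X $$ (i, i) = 0"
    and prefix: "\<And>j. j < m \<Longrightarrow>
      (\<Sum>i<Suc j. rotated_population d U X i) - (\<Sum>i<Suc j. Re (X $$ (i, i))) \<le> b"
  shows "extracted_work U X \<le> b * (E m - E 0)"
  unfolding extracted_work_eq[OF U densityD(1)[OF X]]
proof (rule weighted_sum_diff_le_of_partial_sums[OF m b _ _ prefix])
  show "E j \<le> E (Suc j)" if "Suc j < d" for j using that by (intro energy_mono) auto
  show "(\<Sum>i<d. Re (X $$ (i, i))) = (\<Sum>i<d. rotated_population d U X i)"
    unfolding densityD(4)[OF X] sum_rotated_population[OF X U] ..
  fix j assume j: "m \<le> j" "j < d"
  have "(\<Sum>i<Suc j. rotated_population d U X i) \<le> (\<Sum>i<d. rotated_population d U X i)"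
    using rotated_population_nonneg[OF X] j by (intro sum_prefix_le_total) auto
  also have "\<dots> = (\<Sum>i<d. Re (X $$ (i, i)))"
    unfolding sum_rotated_population[OF X U] densityD(4)[OF X] ..
  also have "\<dots> = (\<Sum>i<Suc j. Re (X $$ (i, i)))"
    using tail by (intro sum_prefix_eq_total[symmetric, OF _ j]) simp
  finally show "(\<Sum>i<Suc j. rotated_population d U X i) \<le> (\<Sum>i<Suc j. Re (X $$ (i, i)))" .
qed

lemma ergotropy_le_gap:
  assumes X: "density d X" and m: "m < d" and tail: "\<And>i. m < i \<Longrightarrow> i < d \<Longrightarrow> X $$ (i, i) = 0"
  shows "ergotropy d E X \<le> E m - E 0"
proof (rule ergotropy_le)
  fix U assume U: "unitary_mat d U"
  have "extracted_work U X \<le> 1 * (E m - E 0)"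
  proof (rule extracted_work_le_of_prefix[OF X U m _ tail])
    fix j assume "j < m"
    hence "(\<Sum>i<Suc j. rotated_population d U X i) \<le> 1"
      using sum_prefix_le_total[of d "rotated_population d U X" j] m
        rotated_population_nonneg[OF X] sum_rotated_population[OF X U] by simp
    moreover have "0 \<le> (\<Sum>i<Suc j. Re (X $$ (i, i)))"
      using density_diag_nonneg[OF X] \<open>j < m\<close> m by (intro sum_nonneg) auto
    ultimately show "(\<Sum>i<Suc j. rotated_population d U X i) - (\<Sum>i<Suc j. Re (X $$ (i, i))) \<le> 1"
      by simp
  qed simp
  thus "extracted_work U X \<le> E m - E 0" by simp
qed

lemma passive_extracted_work_nonpos:
  assumes T: "passive_state d \<tau>" and U: "unitary_mat d U"
  shows "extracted_work U \<tau> \<le> 0"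
proof -
  have \<tau>: "density d \<tau>" using T unfolding passive_state_def by blast
  have "extracted_work U \<tau> \<le> 0 * (E (d - 1) - E 0)"
    using passive_prefix_rotated_population_le[OF T U] dim_pos
    by (intro extracted_work_le_of_prefix[OF \<tau> U]) auto
  thus ?thesis by simp
qed

lemma ergotropy_mixture_le:
  assumes \<rho>: "density d \<rho>" and \<sigma>: "density d \<sigma>" and T: "passive_state d \<tau>"
    and t: "0 \<le> t" "t \<le> 1"
    and mix: "\<rho> = complex_of_real t \<cdot>\<^sub>m \<sigma> + complex_of_real (1 - t) \<cdot>\<^sub>m \<tau>"
  shows "ergotropy d E \<rho> \<le> t * ergotropy d E \<sigma>"
proof (rule ergotropy_le)
  fix U assume U: "unitary_mat d U"
  have \<tau>: "density d \<tau>" using T unfolding passive_state_def by blast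
  have "extracted_work U \<rho> = t * extracted_work U \<sigma> + (1 - t) * extracted_work U \<tau>"
    by (rule extracted_work_lincomb[OF U densityD(1)[OF \<rho>] densityD(1)[OF \<sigma>] densityD(1)[OF \<tau>]])
      (use densityD(1)[OF \<sigma>] densityD(1)[OF \<tau>] in \<open>simp add: mix\<close>)
  also have "\<dots> \<le> t * ergotropy d E \<sigma> + (1 - t) * 0"
    using extracted_work_le_ergotropy[OF \<sigma> U] passive_extracted_work_nonpos[OF T U] t
    by (intro add_mono mult_left_mono) auto
  finally show "extracted_work U \<rho> \<le> t * ergotropy d E \<sigma>" by simp
qed

lemma ergotropy_le_of_robustness_witness:
  assumes \<rho>: "density d \<rho>" and \<sigma>: "density d \<sigma>" and t: "0 \<le> t"
    and P: "passive_state d (complex_of_real (1 / (1 + t)) \<cdot>\<^sub>m (\<rho> + complex_of_real t \<cdot>\<^sub>m \<sigma>))"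
    and m: "m < d" and tail: "\<And>i. m < i \<Longrightarrow> i < d \<Longrightarrow> \<rho> $$ (i, i) = 0"
  shows "ergotropy d E \<rho> \<le> t * (E m - E 0)"
proof (rule ergotropy_le)
  fix U assume U: "unitary_mat d U"
  define T where "T = complex_of_real (1 / (1 + t)) \<cdot>\<^sub>m (\<rho> + complex_of_real t \<cdot>\<^sub>m \<sigma>)"
  have T: "density d T" using P unfolding T_def passive_state_def by blast
  have lin: "\<rho> $$ (k, l) = complex_of_real (1 + t) * T $$ (k, l) + complex_of_real (- t) * \<sigma> $$ (k, l)"
    if "k < d" "l < d" for k l
    using densityD(1)[OF \<rho>] densityD(1)[OF \<sigma>] that t unfolding T_def
    by (simp add: field_simps flip: of_real_add)
  have pop: "(\<Sum>i<Suc j. rotated_population d U \<rho> i)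
      = (1 + t) * (\<Sum>i<Suc j. rotated_population d U T i) - t * (\<Sum>i<Suc j. rotated_population d U \<sigma> i)"
    for j
  proof -
    have "(\<Sum>i<Suc j. rotated_population d U \<rho> i)
        = (\<Sum>i<Suc j. (1 + t) * rotated_population d U T i - t * rotated_population d U \<sigma> i)"
      by (intro sum.cong refl) (simp add: rotated_population_lincomb[OF lin])
    thus ?thesis by (simp add: sum_subtractf sum_distrib_left del: sum.lessThan_Suc)
  qed
  have diag: "(\<Sum>i<Suc j. Re (\<rho> $$ (i, i)))
      = (1 + t) * (\<Sum>i<Suc j. Re (T $$ (i, i))) - t * (\<Sum>i<Suc j. Re (\<sigma> $$ (i, i)))"
    if "j < d" for j
  proof -
    have "(\<Sum>i<Suc j. Re (\<rho> $$ (i, i))) = (\<Sum>i<Suc j. (1 + t) * Re (T $$ (i, i)) - t * Re (\<sigma> $$ (i, i)))"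
      using that by (intro sum.cong refl) (simp add: lin)
    thus ?thesis by (simp add: sum_subtractf sum_distrib_left del: sum.lessThan_Suc)
  qed
  show "extracted_work U \<rho> \<le> t * (E m - E 0)"
  proof (rule extracted_work_le_of_prefix[OF \<rho> U m t tail])
    fix j assume "j < m"
    hence j: "j < d" using m by simp
    let ?RT = "\<Sum>i<Suc j. rotated_population d U T i" and ?DT = "\<Sum>i<Suc j. Re (T $$ (i, i))"
    let ?R\<sigma> = "\<Sum>i<Suc j. rotated_population d U \<sigma> i" and ?D\<sigma> = "\<Sum>i<Suc j. Re (\<sigma> $$ (i, i))"
    have "?RT \<le> ?DT" using passive_prefix_rotated_population_le[OF P[folded T_def] U j] .
    hence T_part: "(1 + t) * (?RT - ?DT) \<le> 0" using t by (simp add: mult_nonneg_nonpos)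
    have "?D\<sigma> \<le> (\<Sum>i<d. Re (\<sigma> $$ (i, i)))"
      by (rule sum_prefix_le_total[OF _ j]) (rule density_diag_nonneg[OF \<sigma>])
    hence \<sigma>_diag: "t * ?D\<sigma> \<le> t * 1" unfolding densityD(4)[OF \<sigma>] using t by (rule mult_left_mono)
    have \<sigma>_pop: "0 \<le> t * ?R\<sigma>" using rotated_population_nonneg[OF \<sigma>] t by (simp add: sum_nonneg)
    have "(1 + t) * ?RT - t * ?R\<sigma> - ((1 + t) * ?DT - t * ?D\<sigma>)
        = (1 + t) * (?RT - ?DT) + t * ?D\<sigma> - t * ?R\<sigma>"
      by (simp add: algebra_simps)
    thus "(\<Sum>i<Suc j. rotated_population d U \<rho> i) - (\<Sum>i<Suc j. Re (\<rho> $$ (i, i))) \<le> t"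
      unfolding pop diag[OF j] using T_part \<sigma>_diag \<sigma>_pop by linarith
  qed
qed

lemma ground_state_passive:
  assumes "0 < d"
  shows "passive_state d (mat_diag d (\<lambda>i. complex_of_real (if i = 0 then 1 else 0)))"
  using assms by (intro passive_state_diagI) auto

theorem ergotropy_le_activity_weight_mult:
  assumes \<rho>: "density d \<rho>"
  shows "ergotropy d E \<rho> \<le> activity_weight d \<rho> *
    (SUP \<sigma> \<in> {\<sigma>. density d \<sigma> \<and> supp d \<sigma> \<subseteq> supp d \<rho>}. ergotropy d E \<sigma>)"
proof -
  define S where "S = {\<sigma>. density d \<sigma> \<and> supp d \<sigma> \<subseteq> supp d \<rho>}"
  define M where "M = (SUP \<sigma> \<in> S. ergotropy d E \<sigma>)"
  have "bdd_above (ergotropy d E ` S)"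
    using dim_pos by (intro bdd_aboveI2[where M = "E (d - 1) - E 0"] ergotropy_le_gap) (auto simp: S_def)
  hence le_M: "ergotropy d E \<sigma> \<le> M" if "\<sigma> \<in> S" for \<sigma>
    unfolding M_def using that by (rule cSUP_upper2) simp
  have \<rho>_le_M: "ergotropy d E \<rho> \<le> M" using \<rho> by (intro le_M) (simp add: S_def)
  have M0: "0 \<le> M" using ergotropy_nonneg[OF \<rho>] \<rho>_le_M by linarith
  define W where "W = {t. t \<ge> 0 \<and> (\<exists>\<sigma> \<tau>. density d \<sigma> \<and> passive_state d \<tau> \<and>
      \<rho> = complex_of_real t \<cdot>\<^sub>m \<sigma> + complex_of_real (1 - t) \<cdot>\<^sub>m \<tau>)}"
  define \<tau>\<^sub>0 where "\<tau>\<^sub>0 = mat_diag d (\<lambda>i. complex_of_real (if i = 0 then 1 else 0))"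
  have "\<rho> = complex_of_real 1 \<cdot>\<^sub>m \<rho> + complex_of_real (1 - 1) \<cdot>\<^sub>m \<tau>\<^sub>0"
    using densityD(1)[OF \<rho>] by (intro eq_matI) (auto simp: \<tau>\<^sub>0_def mat_diag_def)
  hence "1 \<in> W" unfolding W_def using \<rho> ground_state_passive[OF dim_pos, folded \<tau>\<^sub>0_def] by auto
  moreover have "ergotropy d E \<rho> \<le> t * M" if "t \<in> W" for t
  proof -
    obtain \<sigma> \<tau> where t: "0 \<le> t" and \<sigma>: "density d \<sigma>" and T: "passive_state d \<tau>"
      and mix: "\<rho> = complex_of_real t \<cdot>\<^sub>m \<sigma> + complex_of_real (1 - t) \<cdot>\<^sub>m \<tau>"
      using \<open>t \<in> W\<close> unfolding W_def by blast
    consider "1 \<le> t" | "t = 0" | "0 < t" "t < 1" using t by linarith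
    thus ?thesis
    proof cases
      case 1
      thus ?thesis using mult_right_mono[OF 1 M0] \<rho>_le_M by simp
    next
      case 2
      thus ?thesis using ergotropy_mixture_le[OF \<rho> \<sigma> T t _ mix] by simp
    next
      case 3
      have "psd_mat d \<tau>" using T unfolding passive_state_def density_def by blast
      hence "supp d \<sigma> \<subseteq> supp d \<rho>"
        using \<rho> \<sigma> 3 unfolding density_def by (intro supp_subset_of_mixture[OF _ _ _ _ _ mix]) auto
      hence "ergotropy d E \<sigma> \<le> M" using \<sigma> by (intro le_M) (simp add: S_def)
      hence "t * ergotropy d E \<sigma> \<le> t * M" using t by (rule mult_left_mono)
      moreover have "ergotropy d E \<rho> \<le> t * ergotropy d E \<sigma>"
        using 3 by (intro ergotropy_mixture_le[OF \<rho> \<sigma> T t _ mix]) simp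
      ultimately show ?thesis by linarith
    qed
  qed
  ultimately have "ergotropy d E \<rho> \<le> Inf W * M" using M0 by (intro le_cInf_mult) auto
  thus ?thesis unfolding activity_weight_def W_def M_def S_def .
qed

theorem ergotropy_le_activity_robustness_mult:
  assumes \<rho>: "density d \<rho>"
  shows "ergotropy d E \<rho> \<le> min (activity_robustness d \<rho>) 1 *
    (E (Max {i. i < d \<and> \<rho> $$ (i, i) \<noteq> 0}) - E 0)"
proof -
  define m where "m = Max {i. i < d \<and> \<rho> $$ (i, i) \<noteq> 0}"
  have "{i. i < d \<and> \<rho> $$ (i, i) \<noteq> 0} \<noteq> {}"
  proof
    assume "{i. i < d \<and> \<rho> $$ (i, i) \<noteq> 0} = {}"
    hence "(\<Sum>i<d. Re (\<rho> $$ (i, i))) = 0" by (intro sum.neutral) auto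
    thus False using densityD(4)[OF \<rho>] by simp
  qed
  hence "m \<in> {i. i < d \<and> \<rho> $$ (i, i) \<noteq> 0}" unfolding m_def by (intro Max_in) auto
  hence m: "m < d" by simp
  have tail: "\<rho> $$ (i, i) = 0" if "m < i" "i < d" for i
  proof (rule ccontr)
    assume "\<rho> $$ (i, i) \<noteq> 0"
    hence "i \<le> m" unfolding m_def using \<open>i < d\<close> by (intro Max_ge) auto
    thus False using \<open>m < i\<close> by simp
  qed
  have gap: "ergotropy d E \<rho> \<le> E m - E 0" by (rule ergotropy_le_gap[OF \<rho> m tail])
  define R where "R = {t. t \<ge> 0 \<and> (\<exists>\<sigma>. density d \<sigma> \<and>
      passive_state d (complex_of_real (1 / (1 + t)) \<cdot>\<^sub>m (\<rho> + complex_of_real t \<cdot>\<^sub>m \<sigma>)))}"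
  have "R \<noteq> {}" using robustness_witness_exists[OF dim_pos \<rho>] unfolding R_def by blast
  moreover have "ergotropy d E \<rho> \<le> t * (E m - E 0)" if t: "t \<in> R" for t
  proof -
    obtain \<sigma> where "0 \<le> t" "density d \<sigma>"
      "passive_state d (complex_of_real (1 / (1 + t)) \<cdot>\<^sub>m (\<rho> + complex_of_real t \<cdot>\<^sub>m \<sigma>))"
      using t unfolding R_def by blast
    thus ?thesis by (intro ergotropy_le_of_robustness_witness[OF \<rho> _ _ _ m tail])
  qed
  ultimately have "ergotropy d E \<rho> \<le> activity_robustness d \<rho> * (E m - E 0)"
    unfolding activity_robustness_def R_def[symmetric] using energy_mono[of 0 m] m
    by (intro le_cInf_mult) auto
  hence "ergotropy d E \<rho> \<le> min (activity_robustness d \<rho>) 1 * (E m - E 0)"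
    using gap by (simp add: min_def)
  thus ?thesis unfolding m_def .
qed

end

theorem mainTheorem11:
  fixes d :: nat and E :: "nat \<Rightarrow> real" and \<rho> :: "complex mat"
  assumes "d \<ge> 1"
    and "\<And>i j. i < j \<Longrightarrow> j < d \<Longrightarrow> E i < E j"
    and "density d \<rho>"
  shows "ergotropy d E \<rho> \<le> activity_weight d \<rho> *
           (SUP \<sigma> \<in> {\<sigma>. density d \<sigma> \<and> supp d \<sigma> \<subseteq> supp d \<rho>}. ergotropy d E \<sigma>) \<and>
         ergotropy d E \<rho> \<le> min (activity_robustness d \<rho>) 1 *
           (E (Max {i. i < d \<and> \<rho> $$ (i, i) \<noteq> 0}) - E 0)"
proof -
  interpret level_energies d E
  proof
    show "0 < d" using assms(1) by simp
    show "E i \<le> E j" if "i \<le> j" "j < d" for i j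
      using assms(2)[of i j] that by (cases "i = j") auto
  qed
  show ?thesis
    using ergotropy_le_activity_weight_mult[OF assms(3)]
      ergotropy_le_activity_robustness_mult[OF assms(3)] by blast
qed

end
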